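(* Let $\mathsf G=(\mathsf V,\mathsf E)$ be a finite connected graph without loops or multiple edges, with discrete Laplacian $\mathcal L=\mathcal I\mathcal I^T$. Then there exists some $p\in(2,\infty)$ such that the semigroup $(e^{-t\mathcal L^2})_{t\ge0}$ is $\ell^p$-contractive, i.e. $\|e^{-t\mathcal L^2}f\|_{\ell^p(\mathsf V)}\le\|f\|_{\ell^p(\mathsf V)}$ for all $t\ge0$ and all $f$.
   Context: $V=|\mathsf V|$ and functions on the vertices are vectors in $\mathbb C^V$. After fixing an arbitrary orientation of the edges, the incidence matrix $\mathcal I\in\mathbb R^{V\times E}$ has entries $\iota_{\mathsf v\mathsf e}=-1$ if $\mathsf v$ is the initial endpoint of $\mathsf e$, $+1$ if $\mathsf v$ is the terminal endpoint of $\mathsf e$, and $0$ otherwise; $\mathcal L=\mathcal I\mathcal I^T$. *)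

theory Defs
  imports "HOL-Analysis.Analysis"
begin

text \<open>A graph is given by a set
  Ed of oriented edges (pairs (initial, terminal)); the orientation is arbitrary.\<close>

definition simple_oriented_graph :: "('v \<times> 'v) set \<Rightarrow> bool" where
  "simple_oriented_graph Ed \<longleftrightarrow>
     (\<forall>(a,b)\<in>Ed. a \<noteq> b) \<and> (\<forall>(a,b)\<in>Ed. (b,a) \<notin> Ed)"

definition adjacent :: "('v \<times> 'v) set \<Rightarrow> 'v \<Rightarrow> 'v \<Rightarrow> bool" where
  "adjacent Ed u w \<longleftrightarrow> (u,w) \<in> Ed \<or> (w,u) \<in> Ed"

definition connected_graph :: "('v \<times> 'v) set \<Rightarrow> bool" where
  "connected_graph Ed \<longleftrightarrow> (\<forall>u w. (adjacent Ed)\<^sup>*\<^sup>* u w)"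

definition incidence :: "('v \<times> 'v) set \<Rightarrow> 'v \<Rightarrow> ('v \<times> 'v) \<Rightarrow> real" where
  "incidence Ed v e = (if e \<in> Ed then (if v = fst e then -1 else if v = snd e then 1 else 0) else 0)"

definition laplacian :: "('v \<times> 'v) set \<Rightarrow> 'v \<Rightarrow> 'v \<Rightarrow> real" where
  "laplacian Ed u w = (\<Sum>e\<in>Ed. incidence Ed u e * incidence Ed w e)"

definition mat_mult :: "('v::finite \<Rightarrow> 'v \<Rightarrow> real) \<Rightarrow> ('v \<Rightarrow> 'v \<Rightarrow> real) \<Rightarrow> 'v \<Rightarrow> 'v \<Rightarrow> real" where
  "mat_mult A B i j = (\<Sum>k\<in>UNIV. A i k * B k j)"

definition mat_id :: "'v \<Rightarrow> 'v \<Rightarrow> real" where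
  "mat_id i j = (if i = j then 1 else 0)"

primrec mat_pow :: "('v::finite \<Rightarrow> 'v \<Rightarrow> real) \<Rightarrow> nat \<Rightarrow> 'v \<Rightarrow> 'v \<Rightarrow> real" where
  "mat_pow A 0 = mat_id"
| "mat_pow A (Suc n) = mat_mult A (mat_pow A n)"

definition mat_exp :: "('v::finite \<Rightarrow> 'v \<Rightarrow> real) \<Rightarrow> 'v \<Rightarrow> 'v \<Rightarrow> real" where
  "mat_exp A i j = (\<Sum>n. mat_pow A n i j / fact n)"

definition mat_scale :: "real \<Rightarrow> ('v \<Rightarrow> 'v \<Rightarrow> real) \<Rightarrow> 'v \<Rightarrow> 'v \<Rightarrow> real" where
  "mat_scale c A i j = c * A i j"

definition mat_apply :: "('v::finite \<Rightarrow> 'v \<Rightarrow> real) \<Rightarrow> ('v \<Rightarrow> complex) \<Rightarrow> 'v \<Rightarrow> complex" where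
  "mat_apply A f i = (\<Sum>j\<in>UNIV. complex_of_real (A i j) * f j)"

definition lp_norm :: "real \<Rightarrow> ('v::finite \<Rightarrow> complex) \<Rightarrow> real" where
  "lp_norm p f = (\<Sum>v\<in>UNIV. cmod (f v) powr p) powr (1 / p)"

end

theory Submission
  imports Defs
begin

text \<open>
  Put \<open>A = L\<^sup>2\<close>, \<open>G(t) = e\<^sup>-\<^sup>t\<^sup>A f\<close> and \<open>p = 2 + q\<close>. Then
  \<open>d/dt \<parallel>G\<parallel>\<^sub>p\<^sup>p = -p \<Sum>\<^sub>v \<bar>G v\<bar>\<^sup>q Re ((A G) v * cnj (G v)) = -p \<langle>L (\<bar>G\<bar>\<^sup>q G), L G\<rangle>\<close>
  by symmetry of \<open>L\<close>, so it suffices that \<open>\<langle>L (\<bar>g\<bar>\<^sup>q g), L g\<rangle> \<ge> 0\<close> for every \<open>g\<close>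
  once \<open>q\<close> is small. Let \<open>\<bar>g\<bar>\<close> attain its maximum \<open>R\<close> at \<open>w\<close> and write
  \<open>\<bar>g\<bar>\<^sup>q g = R\<^sup>q g + \<rho>\<close>. The main term contributes \<open>R\<^sup>q \<parallel>L g\<parallel>\<^sup>2\<close>, while
  \<open>\<bar>\<rho> v\<bar> \<le> q R\<^sup>q \<bar>g v - g w\<bar>\<close>. Summing edge differences along paths bounds
  \<open>\<parallel>g - g w\<parallel>\<^sup>2\<close> by a multiple of \<open>\<langle>L g, g\<rangle> = \<langle>L g, g - g w\<rangle>\<close> (as \<open>L\<close> kills
  constants), whence the Poincare inequality \<open>\<parallel>g - g w\<parallel> \<le> C \<parallel>L g\<parallel>\<close>. So the error
  term is \<open>O(q) R\<^sup>q \<parallel>L g\<parallel>\<^sup>2\<close> and is dominated by the main term for small \<open>q\<close>.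
\<close>

lemma mat_apply_mult: "mat_apply (mat_mult A B) f v = mat_apply A (mat_apply B f) v"
proof -
  have "mat_apply (mat_mult A B) f v =
      (\<Sum>j\<in>UNIV. \<Sum>k\<in>UNIV. complex_of_real (A v k) * (complex_of_real (B k j) * f j))"
    unfolding mat_apply_def mat_mult_def
    by (simp add: of_real_sum sum_distrib_right sum_distrib_left mult_ac)
  also have "\<dots> = mat_apply A (mat_apply B f) v"
    unfolding mat_apply_def by (subst sum.swap) (simp add: sum_distrib_left)
  finally show ?thesis .
qed

lemma mat_apply_id [simp]: "mat_apply mat_id f = f"
proof
  fix x
  have "mat_apply mat_id f x = (\<Sum>j\<in>UNIV. if j = x then f j else 0)"
    unfolding mat_apply_def by (rule sum.cong) (auto simp: mat_id_def)
  then show "mat_apply mat_id f x = f x" by simp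
qed

lemma mat_apply_add: "mat_apply A (\<lambda>v. x v + y v) = (\<lambda>u. mat_apply A x u + mat_apply A y u)"
  by (simp add: fun_eq_iff mat_apply_def ring_distribs sum.distrib)

lemma mat_apply_scaleR:
  "mat_apply A (\<lambda>v. complex_of_real a * x v) = (\<lambda>u. complex_of_real a * mat_apply A x u)"
  by (simp add: fun_eq_iff mat_apply_def sum_distrib_left mult_ac)

lemma Re_mat_apply: "Re (mat_apply A f v) = (\<Sum>j\<in>UNIV. A v j * Re (f j))"
  by (simp add: mat_apply_def Re_sum)

lemma Im_mat_apply: "Im (mat_apply A f v) = (\<Sum>j\<in>UNIV. A v j * Im (f j))"
  by (simp add: mat_apply_def Im_sum)

lemma mat_pow_scale: "mat_pow (mat_scale c A) n = mat_scale (c ^ n) (mat_pow A n)"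
  by (induction n) (auto simp: mat_scale_def mat_mult_def fun_eq_iff sum_distrib_left mult_ac)

lemma abs_mat_pow_le:
  fixes A :: "'v::finite \<Rightarrow> 'v \<Rightarrow> real"
  shows "\<bar>mat_pow A n i j\<bar> \<le> (\<Sum>a\<in>UNIV. \<Sum>b\<in>UNIV. \<bar>A a b\<bar>) ^ n"
proof (induction n arbitrary: i j)
  case 0
  show ?case by (simp add: mat_id_def)
next
  case (Suc n)
  let ?B = "\<Sum>a\<in>UNIV. \<Sum>b\<in>UNIV. \<bar>A a b\<bar>"
  have "\<bar>mat_pow A (Suc n) i j\<bar> \<le> (\<Sum>k\<in>UNIV. \<bar>A i k\<bar> * \<bar>mat_pow A n k j\<bar>)"
    unfolding mat_pow.simps mat_mult_def by (rule order_trans[OF sum_abs]) (simp add: abs_mult)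
  also have "\<dots> \<le> (\<Sum>k\<in>UNIV. \<bar>A i k\<bar>) * ?B ^ n"
    unfolding sum_distrib_right by (rule sum_mono) (simp add: Suc mult_left_mono)
  also have "\<dots> \<le> ?B * ?B ^ n"
    by (intro mult_right_mono member_le_sum[of i UNIV "\<lambda>a. \<Sum>b\<in>UNIV. \<bar>A a b\<bar>", simplified])
       (auto simp: sum_nonneg)
  finally show ?case by simp
qed

subsection \<open>The semigroup generated by a real matrix\<close>

definition neg_exp_coeff :: "('v::finite \<Rightarrow> 'v \<Rightarrow> real) \<Rightarrow> 'v \<Rightarrow> 'v \<Rightarrow> nat \<Rightarrow> real" where
  "neg_exp_coeff A i j n = (-1) ^ n * mat_pow A n i j / fact n"

lemma mat_exp_neg_scale_powser:
  "mat_exp (mat_scale (- t) A) i j = (\<Sum>n. neg_exp_coeff A i j n * t ^ n)"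
  unfolding mat_exp_def neg_exp_coeff_def mat_pow_scale mat_scale_def power_minus[of t]
  by (simp add: mult_ac)

lemma mat_exp_scale_0: "mat_exp (mat_scale 0 A) = mat_id"
proof (intro ext)
  fix i j
  have "mat_exp (mat_scale (- 0) A) i j = (\<Sum>n. neg_exp_coeff A i j n * 0 ^ n)"
    by (rule mat_exp_neg_scale_powser)
  also have "\<dots> = mat_id i j"
    by (subst powser_zero) (simp add: neg_exp_coeff_def)
  finally show "mat_exp (mat_scale 0 A) i j = mat_id i j" by simp
qed

lemma summable_neg_exp_coeff:
  fixes A :: "'v::finite \<Rightarrow> 'v \<Rightarrow> real"
  shows "summable (\<lambda>n. neg_exp_coeff A i j n * y ^ n)"
proof (rule summable_comparison_test'[where N = 0])
  let ?B = "\<Sum>a\<in>UNIV. \<Sum>b\<in>UNIV. \<bar>A a b\<bar>"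
  show "summable (\<lambda>n. inverse (fact n) * (?B * \<bar>y\<bar>) ^ n)" by (rule summable_exp)
  fix n :: nat
  have "norm (neg_exp_coeff A i j n * y ^ n) = \<bar>mat_pow A n i j\<bar> * \<bar>y\<bar> ^ n / fact n"
    by (simp add: neg_exp_coeff_def abs_mult power_abs)
  also have "\<dots> \<le> ?B ^ n * \<bar>y\<bar> ^ n / fact n"
    by (intro divide_right_mono mult_right_mono abs_mat_pow_le) auto
  finally show "norm (neg_exp_coeff A i j n * y ^ n) \<le> inverse (fact n) * (?B * \<bar>y\<bar>) ^ n"
    by (simp add: power_mult_distrib field_simps)
qed

lemma diffs_neg_exp_coeff:
  "diffs (neg_exp_coeff A i j) n = - (\<Sum>k\<in>UNIV. A i k * neg_exp_coeff A k j n)"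
  by (simp add: diffs_def neg_exp_coeff_def mat_mult_def sum_distrib_left sum_divide_distrib
        sum_negf field_simps del: of_nat_Suc)

lemma mat_exp_neg_scale_deriv:
  fixes A :: "'v::finite \<Rightarrow> 'v \<Rightarrow> real"
  shows "((\<lambda>t. mat_exp (mat_scale (- t) A) i j) has_real_derivative
          - (\<Sum>k\<in>UNIV. A i k * mat_exp (mat_scale (- t) A) k j)) (at t)"
proof -
  have "((\<lambda>t. \<Sum>n. neg_exp_coeff A i j n * t ^ n) has_real_derivative
          (\<Sum>n. diffs (neg_exp_coeff A i j) n * t ^ n)) (at t)"
    by (rule termdiffs_strong_converges_everywhere) (rule summable_neg_exp_coeff)
  moreover have "(\<Sum>n. diffs (neg_exp_coeff A i j) n * t ^ n)
      = - (\<Sum>n. \<Sum>k\<in>UNIV. A i k * (neg_exp_coeff A k j n * t ^ n))"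
    unfolding diffs_neg_exp_coeff sum_distrib_right mult_minus_left mult.assoc
    by (rule suminf_minus) (intro summable_sum summable_mult summable_neg_exp_coeff)
  moreover have "(\<Sum>n. \<Sum>k\<in>UNIV. A i k * (neg_exp_coeff A k j n * t ^ n))
      = (\<Sum>k\<in>UNIV. A i k * mat_exp (mat_scale (- t) A) k j)"
    by (subst suminf_sum)
       (auto intro: summable_mult summable_neg_exp_coeff
         simp: mat_exp_neg_scale_powser suminf_mult summable_neg_exp_coeff)
  ultimately show ?thesis by (simp add: mat_exp_neg_scale_powser)
qed

lemma mat_exp_neg_scale_apply_deriv:
  fixes A :: "'v::finite \<Rightarrow> 'v \<Rightarrow> real"
  shows "((\<lambda>t. \<Sum>j\<in>UNIV. mat_exp (mat_scale (- t) A) v j * r j) has_real_derivative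
          - (\<Sum>k\<in>UNIV. A v k * (\<Sum>j\<in>UNIV. mat_exp (mat_scale (- t) A) k j * r j))) (at t)"
proof -
  have "((\<lambda>t. \<Sum>j\<in>UNIV. mat_exp (mat_scale (- t) A) v j * r j) has_real_derivative
          (\<Sum>j\<in>UNIV. - (\<Sum>k\<in>UNIV. A v k * mat_exp (mat_scale (- t) A) k j) * r j)) (at t)"
    by (intro DERIV_sum DERIV_cmult_right mat_exp_neg_scale_deriv)
  moreover have "(\<Sum>j\<in>UNIV. - (\<Sum>k\<in>UNIV. A v k * mat_exp (mat_scale (- t) A) k j) * r j)
     = - (\<Sum>k\<in>UNIV. A v k * (\<Sum>j\<in>UNIV. mat_exp (mat_scale (- t) A) k j * r j))"
    by (simp add: sum_distrib_left sum_distrib_right sum_negf mult_ac) (rule sum.swap)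
  ultimately show ?thesis by simp
qed

subsection \<open>An \<open>\<ell>\<^sup>p\<close>-contractivity criterion\<close>

lemma power2_powr: "(x\<^sup>2) powr a = \<bar>x\<bar> powr (2 * a)" for x a :: real
proof -
  have "(x\<^sup>2) powr a = (\<bar>x\<bar> powr 2) powr a" by simp
  also have "\<dots> = \<bar>x\<bar> powr (2 * a)" by (rule powr_powr)
  finally show ?thesis .
qed

lemma has_real_derivative_abs_powr_0:
  fixes r :: real
  assumes "1 < r"
  shows "((\<lambda>x. \<bar>x\<bar> powr r) has_real_derivative 0) (at 0)"
proof -
  have "((\<lambda>y. \<bar>y\<bar> powr r / y) \<longlongrightarrow> 0) (at (0::real))"
  proof (rule Lim_null_comparison)
    have "\<forall>\<^sub>F y in at (0::real). y \<noteq> 0" by (simp add: eventually_at_filter)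
    then show "\<forall>\<^sub>F y in at (0::real). norm (\<bar>y\<bar> powr r / y) \<le> \<bar>y\<bar> powr (r - 1)"
      by eventually_elim (simp add: powr_diff)
    show "((\<lambda>y. \<bar>y\<bar> powr (r - 1)) \<longlongrightarrow> 0) (at (0::real))"
      by (rule tendsto_zero_powrI) (use assms in \<open>auto intro!: tendsto_eq_intros\<close>)
  qed
  then show ?thesis by (simp add: has_field_derivative_iff)
qed

lemma has_real_derivative_abs_powr:
  fixes r s :: real
  assumes "1 < r"
  shows "((\<lambda>x. \<bar>x\<bar> powr r) has_real_derivative r * s * \<bar>s\<bar> powr (r - 2)) (at s)"
proof (cases "s = 0")
  case True
  then show ?thesis using has_real_derivative_abs_powr_0[OF assms] by simp
next
  case False
  have "((\<lambda>x. (x\<^sup>2) powr (r / 2)) has_real_derivative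
          r / 2 * (s\<^sup>2) powr (r / 2 - of_nat 1) * (2 * s)) (at s)"
    by (rule DERIV_fun_powr) (use False in \<open>auto intro!: derivative_eq_intros\<close>)
  moreover have "r / 2 * (s\<^sup>2) powr (r / 2 - of_nat 1) * (2 * s) = r * s * \<bar>s\<bar> powr (r - 2)"
    by (simp add: power2_powr algebra_simps)
  ultimately show ?thesis by (simp add: power2_powr mult_ac)
qed

lemma power2_mult_powr:
  fixes x a :: real
  assumes "0 < a"
  shows "x\<^sup>2 * \<bar>x\<bar> powr (a - 2) = \<bar>x\<bar> powr a"
proof (cases "x = 0")
  case False
  have "x\<^sup>2 = \<bar>x\<bar> powr 2" by simp
  then have "x\<^sup>2 * \<bar>x\<bar> powr (a - 2) = \<bar>x\<bar> powr (2 + (a - 2))"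
    by (simp only: powr_add)
  then show ?thesis by simp
next
  case True
  with assms show ?thesis by simp
qed

lemma sum_cmod_powr_mat_exp_deriv:
  fixes A :: "'v::finite \<Rightarrow> 'v \<Rightarrow> real" and f :: "'v \<Rightarrow> complex"
  defines "G \<equiv> \<lambda>s. mat_apply (mat_exp (mat_scale (- s) A)) f"
  assumes "2 < p"
  shows "((\<lambda>s. \<Sum>v\<in>UNIV. cmod (G s v) powr p) has_real_derivative
      - p * (\<Sum>v\<in>UNIV. cmod (G t v) powr (p - 2) * Re (mat_apply A (G t) v * cnj (G t v)))) (at t)"
proof -
  have Re_deriv: "((\<lambda>s. Re (G s v)) has_real_derivative - Re (mat_apply A (G s) v)) (at s)" for s v
    using mat_exp_neg_scale_apply_deriv[of A v "\<lambda>j. Re (f j)" s] by (simp add: G_def Re_mat_apply)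
  have Im_deriv: "((\<lambda>s. Im (G s v)) has_real_derivative - Im (mat_apply A (G s) v)) (at s)" for s v
    using mat_exp_neg_scale_apply_deriv[of A v "\<lambda>j. Im (f j)" s] by (simp add: G_def Im_mat_apply)
  have sq_deriv: "((\<lambda>s. (Re (G s v))\<^sup>2 + (Im (G s v))\<^sup>2) has_real_derivative
      -2 * Re (mat_apply A (G s) v * cnj (G s v))) (at s)" for s v
    unfolding power2_eq_square
    by (rule DERIV_cong[OF DERIV_add[OF DERIV_mult[OF Re_deriv Re_deriv] DERIV_mult[OF Im_deriv Im_deriv]]])
       (simp add: algebra_simps)
  have re_im: "(Re z)\<^sup>2 + (Im z)\<^sup>2 = (cmod z)\<^sup>2" for z
    by (simp add: cmod_power2)
  have cmod_powr: "cmod z powr r = \<bar>(Re z)\<^sup>2 + (Im z)\<^sup>2\<bar> powr (r / 2)" for z r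
    unfolding re_im by (simp add: power2_powr)
  \<comment> \<open>\<open>\<bar>z\<bar>\<^sup>p\<close> is differentiated as \<open>\<bar>x\<bar>\<^sup>p\<^sup>/\<^sup>2\<close> after \<open>Re\<^sup>2 + Im\<^sup>2\<close>, which is
    differentiable even where \<open>G\<close> vanishes because \<open>p / 2 > 1\<close>\<close>
  let ?D = "\<lambda>v. p / 2 * ((Re (G t v))\<^sup>2 + (Im (G t v))\<^sup>2)
         * \<bar>(Re (G t v))\<^sup>2 + (Im (G t v))\<^sup>2\<bar> powr (p / 2 - 2)
         * (-2 * Re (mat_apply A (G t) v * cnj (G t v)))"
  have deriv: "((\<lambda>s. \<Sum>v\<in>UNIV. \<bar>(Re (G s v))\<^sup>2 + (Im (G s v))\<^sup>2\<bar> powr (p / 2))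
      has_real_derivative (\<Sum>v\<in>UNIV. ?D v)) (at t)"
    using assms(2)
    by (intro DERIV_sum DERIV_chain2[OF has_real_derivative_abs_powr sq_deriv]) simp
  have "?D v = - p * (cmod (G t v) powr (p - 2) * Re (mat_apply A (G t) v * cnj (G t v)))" for v
    using assms(2) power2_mult_powr[of "p - 2" "cmod (G t v)"]
    unfolding re_im by (simp add: power2_powr algebra_simps)
  then have "(\<Sum>v\<in>UNIV. ?D v)
      = - p * (\<Sum>v\<in>UNIV. cmod (G t v) powr (p - 2) * Re (mat_apply A (G t) v * cnj (G t v)))"
    by (simp add: sum_distrib_left)
  with deriv show ?thesis by (simp only: cmod_powr[of _ p])
qed

lemma lp_norm_mat_exp_neg_scale_le:
  fixes A :: "'v::finite \<Rightarrow> 'v \<Rightarrow> real"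
  assumes "2 < p"
    and accretive: "\<And>g. 0 \<le> (\<Sum>v\<in>UNIV. cmod (g v) powr (p - 2) * Re (mat_apply A g v * cnj (g v)))"
    and "0 \<le> t"
  shows "lp_norm p (mat_apply (mat_exp (mat_scale (- t) A)) f) \<le> lp_norm p f"
proof -
  define \<Phi> where "\<Phi> s = (\<Sum>v\<in>UNIV. cmod (mat_apply (mat_exp (mat_scale (- s) A)) f v) powr p)" for s
  have "\<Phi> t \<le> \<Phi> 0"
  proof (rule DERIV_nonpos_imp_nonincreasing[OF \<open>0 \<le> t\<close>])
    fix s
    show "\<exists>y. DERIV \<Phi> s :> y \<and> y \<le> 0"
      unfolding \<Phi>_def
      using sum_cmod_powr_mat_exp_deriv[OF assms(1), of A f s] accretive assms(1)
      by (intro exI conjI) (auto intro: mult_nonneg_nonneg)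
  qed
  then have "\<Phi> t powr (1 / p) \<le> \<Phi> 0 powr (1 / p)"
    using assms(1) by (intro powr_mono2) (auto simp: \<Phi>_def sum_nonneg)
  then show ?thesis
    by (simp add: \<Phi>_def lp_norm_def mat_exp_scale_0)
qed

subsection \<open>Hilbert space estimates\<close>

definition sq_l2_norm :: "('v::finite \<Rightarrow> complex) \<Rightarrow> real" where
  "sq_l2_norm g = (\<Sum>v\<in>UNIV. (cmod (g v))\<^sup>2)"

definition re_inner :: "('v::finite \<Rightarrow> complex) \<Rightarrow> ('v \<Rightarrow> complex) \<Rightarrow> real" where
  "re_inner x y = (\<Sum>v\<in>UNIV. Re (x v * cnj (y v)))"

lemma sq_l2_norm_nonneg: "0 \<le> sq_l2_norm g"
  by (simp add: sq_l2_norm_def sum_nonneg)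

lemma re_inner_self: "re_inner x x = sq_l2_norm x"
  by (simp add: re_inner_def sq_l2_norm_def complex_mult_cnj cmod_power2)

lemma re_inner_add_left: "re_inner (\<lambda>v. x v + y v) z = re_inner x z + re_inner y z"
  by (simp add: re_inner_def ring_distribs sum.distrib)

lemma re_inner_scaleR_left: "re_inner (\<lambda>v. complex_of_real a * x v) z = a * re_inner x z"
  by (simp add: re_inner_def sum_distrib_left mult.assoc)

lemma re_inner_diff_right: "re_inner x (\<lambda>v. y v - z v) = re_inner x y - re_inner x z"
  by (simp add: re_inner_def ring_distribs sum_subtractf)

lemma re_inner_Cauchy_Schwarz: "(re_inner x y)\<^sup>2 \<le> sq_l2_norm x * sq_l2_norm y"
proof -
  have "\<bar>re_inner x y\<bar> \<le> (\<Sum>v\<in>UNIV. cmod (x v) * cmod (y v))"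
    unfolding re_inner_def
    by (rule order_trans[OF sum_abs], rule sum_mono)
       (metis abs_Re_le_cmod complex_mod_cnj norm_mult)
  then have "(re_inner x y)\<^sup>2 \<le> (\<Sum>v\<in>UNIV. cmod (x v) * cmod (y v))\<^sup>2"
    by (metis abs_ge_zero power2_abs power_mono)
  also have "\<dots> \<le> sq_l2_norm x * sq_l2_norm y"
    unfolding sq_l2_norm_def by (rule Cauchy_Schwarz_ineq_sum)
  finally show ?thesis .
qed

lemma sq_l2_norm_mat_apply_le:
  fixes A :: "'v::finite \<Rightarrow> 'v \<Rightarrow> real"
  shows "sq_l2_norm (mat_apply A h) \<le> (\<Sum>v\<in>UNIV. \<Sum>u\<in>UNIV. (A v u)\<^sup>2) * sq_l2_norm h"
proof -
  have "(cmod (mat_apply A h v))\<^sup>2 \<le> (\<Sum>u\<in>UNIV. (A v u)\<^sup>2) * sq_l2_norm h" for v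
  proof -
    have "cmod (mat_apply A h v) \<le> (\<Sum>u\<in>UNIV. \<bar>A v u\<bar> * cmod (h u))"
      unfolding mat_apply_def by (rule order_trans[OF norm_sum]) (simp add: norm_mult)
    then have "(cmod (mat_apply A h v))\<^sup>2 \<le> (\<Sum>u\<in>UNIV. \<bar>A v u\<bar> * cmod (h u))\<^sup>2"
      by (rule power_mono) simp
    also have "\<dots> \<le> (\<Sum>u\<in>UNIV. \<bar>A v u\<bar>\<^sup>2) * (\<Sum>u\<in>UNIV. (cmod (h u))\<^sup>2)"
      by (rule Cauchy_Schwarz_ineq_sum)
    finally show ?thesis by (simp add: sq_l2_norm_def)
  qed
  then have "sq_l2_norm (mat_apply A h) \<le> (\<Sum>v\<in>UNIV. (\<Sum>u\<in>UNIV. (A v u)\<^sup>2) * sq_l2_norm h)"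
    unfolding sq_l2_norm_def[of "mat_apply A h"] by (rule sum_mono)
  then show ?thesis by (simp add: sum_distrib_right)
qed

lemma re_inner_mat_apply_sym:
  fixes L :: "'v::finite \<Rightarrow> 'v \<Rightarrow> real"
  assumes sym: "\<And>u v. L u v = L v u"
  shows "(\<Sum>v\<in>UNIV. c v * Re (mat_apply (mat_mult L L) G v * cnj (G v)))
       = re_inner (mat_apply L (\<lambda>v. complex_of_real (c v) * G v)) (mat_apply L G)"
proof -
  have "(\<Sum>u\<in>UNIV. mat_apply L (\<lambda>v. complex_of_real (c v) * G v) u * cnj (mat_apply L G u))
      = (\<Sum>u\<in>UNIV. \<Sum>v\<in>UNIV. complex_of_real (c v) * G v * (complex_of_real (L u v) * cnj (mat_apply L G u)))"
    unfolding mat_apply_def[of L "\<lambda>v. complex_of_real (c v) * G v"]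
    by (simp add: sum_distrib_right sum_distrib_left mult_ac)
  also have "\<dots> = (\<Sum>v\<in>UNIV. \<Sum>u\<in>UNIV. complex_of_real (c v) * G v * (complex_of_real (L u v) * cnj (mat_apply L G u)))"
    by (rule sum.swap)
  also have "\<dots> = (\<Sum>v\<in>UNIV. complex_of_real (c v) * G v * cnj (mat_apply (mat_mult L L) G v))"
    unfolding mat_apply_mult mat_apply_def[of L "mat_apply L G"]
    by (simp add: sum_distrib_left cnj_sum sym)
  finally have "re_inner (mat_apply L (\<lambda>v. complex_of_real (c v) * G v)) (mat_apply L G)
      = Re (\<Sum>v\<in>UNIV. complex_of_real (c v) * G v * cnj (mat_apply (mat_mult L L) G v))"
    unfolding re_inner_def by (simp only: Re_sum[symmetric])
  also have "\<dots> = (\<Sum>v\<in>UNIV. c v * Re (mat_apply (mat_mult L L) G v * cnj (G v)))"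
    by (simp add: Re_sum mult_ac ring_distribs)
  finally show ?thesis by simp
qed

lemma mult_one_minus_powr_le:
  fixes x q :: real
  assumes "0 < x" and "0 < q"
  shows "x * (1 - x powr q) \<le> q * (1 - x)"
proof -
  have "1 + q * ln x \<le> x powr q"
    using assms(1) exp_ge_add_one_self[of "q * ln x"] by (simp add: powr_def)
  then have "x * (1 - x powr q) \<le> q * (x * - ln x)"
    using mult_left_mono[of "1 - x powr q" "q * - ln x" x] assms(1) by (simp add: algebra_simps)
  also have "x * - ln x \<le> 1 - x"
    using assms(1) ln_le_minus_one[of "1 / x"] mult_left_mono[of "- ln x" "1 / x - 1" x]
    by (simp add: ln_div field_simps)
  then have "q * (x * - ln x) \<le> q * (1 - x)"
    using assms(2) by (intro mult_left_mono) auto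
  finally show ?thesis .
qed

lemma mult_powr_diff_le:
  fixes s R q :: real
  assumes "0 \<le> s" and "s \<le> R" and "0 < q"
  shows "s * (R powr q - s powr q) \<le> q * R powr q * (R - s)"
proof (cases "s = 0")
  case False
  with assms have "0 < s" "0 < R" by auto
  define x where "x = s / R"
  have s_eq: "s = R * x" and "0 < x" using \<open>0 < s\<close> \<open>0 < R\<close> by (auto simp: x_def)
  have "s * (R powr q - s powr q) = (R * R powr q) * (x * (1 - x powr q))"
    using \<open>0 < R\<close> \<open>0 < x\<close> by (simp add: s_eq powr_mult algebra_simps)
  also have "\<dots> \<le> (R * R powr q) * (q * (1 - x))"
    using \<open>0 < R\<close> by (intro mult_left_mono mult_one_minus_powr_le \<open>0 < x\<close> \<open>0 < q\<close>) auto
  also have "\<dots> = q * R powr q * (R - s)" by (simp add: s_eq algebra_simps)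
  finally show ?thesis .
qed (use assms in simp)

lemma cmod_powr_diff_mult_le:
  fixes z w :: complex and q :: real
  assumes "cmod z \<le> cmod w" and "0 < q"
  shows "cmod (complex_of_real (cmod w powr q - cmod z powr q) * z) \<le> q * cmod w powr q * cmod (z - w)"
proof -
  have "cmod z powr q \<le> cmod w powr q"
    using assms by (intro powr_mono2) auto
  then have "cmod (complex_of_real (cmod w powr q - cmod z powr q) * z)
      = cmod z * (cmod w powr q - cmod z powr q)"
    by (simp add: norm_mult mult.commute flip: of_real_diff)
  also have "\<dots> \<le> q * cmod w powr q * (cmod w - cmod z)"
    using assms by (intro mult_powr_diff_le) auto
  also have "\<dots> \<le> q * cmod w powr q * cmod (z - w)"
    using assms(2) norm_triangle_ineq3[of w z] by (intro mult_left_mono) (auto simp: norm_minus_commute)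
  finally show ?thesis .
qed

lemma re_inner_powr_mult_nonneg:
  fixes L :: "'v::finite \<Rightarrow> 'v \<Rightarrow> real" and g :: "'v \<Rightarrow> complex"
  assumes poincare: "\<And>w. sq_l2_norm (\<lambda>v. g v - g w) \<le> C * sq_l2_norm (mat_apply L g)"
    and "0 < q"
    and small: "q\<^sup>2 * C * (\<Sum>v\<in>UNIV. \<Sum>u\<in>UNIV. (L v u)\<^sup>2) \<le> 1"
  shows "0 \<le> re_inner (mat_apply L (\<lambda>v. complex_of_real (cmod (g v) powr q) * g v)) (mat_apply L g)"
proof -
  let ?Lg = "mat_apply L g"
  define M where "M = (\<Sum>v\<in>UNIV. \<Sum>u\<in>UNIV. (L v u)\<^sup>2)"
  have "Max (range (\<lambda>v. cmod (g v))) \<in> range (\<lambda>v. cmod (g v))"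
    by (rule Max_in) auto
  then obtain w where "cmod (g w) = Max (range (\<lambda>v. cmod (g v)))" by (metis imageE)
  then have w_max: "cmod (g v) \<le> cmod (g w)" for v by simp
  define a where "a = cmod (g w) powr q"
  define \<rho> where "\<rho> v = complex_of_real (cmod (g v) powr q - a) * g v" for v
  have "(\<lambda>v. complex_of_real (cmod (g v) powr q) * g v) = (\<lambda>v. complex_of_real a * g v + \<rho> v)"
    by (simp add: \<rho>_def algebra_simps)
  then have split: "re_inner (mat_apply L (\<lambda>v. complex_of_real (cmod (g v) powr q) * g v)) ?Lg
      = a * sq_l2_norm ?Lg + re_inner (mat_apply L \<rho>) ?Lg"
    by (simp add: mat_apply_add mat_apply_scaleR re_inner_add_left re_inner_scaleR_left re_inner_self)
  have "cmod (\<rho> v) \<le> q * a * cmod (g v - g w)" for v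
    using cmod_powr_diff_mult_le[OF w_max \<open>0 < q\<close>, of v]
    by (simp add: \<rho>_def a_def norm_mult norm_minus_commute)
  then have "sq_l2_norm \<rho> \<le> (q * a)\<^sup>2 * sq_l2_norm (\<lambda>v. g v - g w)"
    unfolding sq_l2_norm_def sum_distrib_left power_mult_distrib[symmetric]
    by (intro sum_mono power_mono) auto
  have "(re_inner (mat_apply L \<rho>) ?Lg)\<^sup>2 \<le> sq_l2_norm (mat_apply L \<rho>) * sq_l2_norm ?Lg"
    by (rule re_inner_Cauchy_Schwarz)
  also have "\<dots> \<le> M * sq_l2_norm \<rho> * sq_l2_norm ?Lg"
    unfolding M_def by (intro mult_right_mono sq_l2_norm_mat_apply_le sq_l2_norm_nonneg)
  also have "\<dots> \<le> M * ((q * a)\<^sup>2 * (C * sq_l2_norm ?Lg)) * sq_l2_norm ?Lg"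
  proof -
    have "sq_l2_norm \<rho> \<le> (q * a)\<^sup>2 * (C * sq_l2_norm ?Lg)"
      using \<open>sq_l2_norm \<rho> \<le> _\<close> poincare[of w] by (meson order_trans mult_left_mono zero_le_power2)
    moreover have "0 \<le> M" by (simp add: M_def sum_nonneg)
    ultimately show ?thesis by (simp add: mult_left_mono mult_right_mono sq_l2_norm_nonneg)
  qed
  also have "\<dots> = (a * sq_l2_norm ?Lg)\<^sup>2 * (q\<^sup>2 * C * M)"
    by (simp only: power_mult_distrib power2_eq_square mult_ac)
  also have "\<dots> \<le> (a * sq_l2_norm ?Lg)\<^sup>2"
    using small unfolding M_def by (rule mult_left_le) simp
  finally have "\<bar>re_inner (mat_apply L \<rho>) ?Lg\<bar>\<^sup>2 \<le> (a * sq_l2_norm ?Lg)\<^sup>2"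
    by (simp only: power2_abs)
  then have "\<bar>re_inner (mat_apply L \<rho>) ?Lg\<bar> \<le> a * sq_l2_norm ?Lg"
    by (rule power2_le_imp_le) (simp add: a_def sq_l2_norm_nonneg)
  then show ?thesis unfolding split by linarith
qed

subsection \<open>The graph Laplacian\<close>

lemma laplacian_sym: "laplacian Ed u w = laplacian Ed w u"
  by (simp add: laplacian_def mult.commute)

lemma sum_incidence:
  fixes Ed :: "('v::finite \<times> 'v) set"
  assumes "simple_oriented_graph Ed"
  shows "(\<Sum>u\<in>UNIV. incidence Ed u e) = 0"
proof (cases "e \<in> Ed")
  case True
  obtain a b where e: "e = (a, b)" by fastforce
  with True assms have "a \<noteq> b" by (auto simp: simple_oriented_graph_def)
  with True e have "(\<Sum>u\<in>UNIV. incidence Ed u e)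
      = (\<Sum>u\<in>UNIV. (if u = b then 1 else 0) - (if u = a then 1 else 0))"
    by (intro sum.cong) (auto simp: incidence_def)
  then show ?thesis by (simp add: sum_subtractf)
qed (simp add: incidence_def)

lemma sum_laplacian:
  fixes Ed :: "('v::finite \<times> 'v) set"
  assumes "simple_oriented_graph Ed"
  shows "(\<Sum>v\<in>UNIV. laplacian Ed v u) = 0"
proof -
  have "(\<Sum>v\<in>UNIV. laplacian Ed v u) = (\<Sum>e\<in>Ed. incidence Ed u e * (\<Sum>v\<in>UNIV. incidence Ed v e))"
    unfolding laplacian_def by (simp add: sum_distrib_left mult.commute) (rule sum.swap)
  then show ?thesis by (simp add: sum_incidence[OF assms])
qed

definition grad :: "('v \<times> 'v) set \<Rightarrow> ('v::finite \<Rightarrow> complex) \<Rightarrow> 'v \<times> 'v \<Rightarrow> complex" where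
  "grad Ed g e = (\<Sum>u\<in>UNIV. complex_of_real (incidence Ed u e) * g u)"

lemma grad_edge:
  assumes "simple_oriented_graph Ed" and "(a, b) \<in> Ed"
  shows "grad Ed g (a, b) = g b - g a"
proof -
  from assms have "a \<noteq> b" by (auto simp: simple_oriented_graph_def)
  with assms(2) have "grad Ed g (a, b) = (\<Sum>u\<in>UNIV. (if u = b then g u else 0) - (if u = a then g u else 0))"
    unfolding grad_def by (intro sum.cong) (auto simp: incidence_def)
  then show ?thesis by (simp add: sum_subtractf)
qed

lemma mat_apply_laplacian:
  fixes Ed :: "('v::finite \<times> 'v) set"
  shows "mat_apply (laplacian Ed) g v = (\<Sum>e\<in>Ed. complex_of_real (incidence Ed v e) * grad Ed g e)"
proof -
  have "mat_apply (laplacian Ed) g v = (\<Sum>u\<in>UNIV. \<Sum>e\<in>Ed.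
      complex_of_real (incidence Ed v e) * (complex_of_real (incidence Ed u e) * g u))"
    unfolding mat_apply_def laplacian_def
    by (simp add: of_real_sum sum_distrib_right sum_distrib_left mult_ac)
  then show ?thesis
    by (subst (asm) sum.swap) (simp add: grad_def sum_distrib_left)
qed

lemma re_inner_laplacian_self:
  fixes Ed :: "('v::finite \<times> 'v) set"
  shows "re_inner (mat_apply (laplacian Ed) g) g = (\<Sum>e\<in>Ed. (cmod (grad Ed g e))\<^sup>2)"
proof -
  let ?c = "\<lambda>v e. complex_of_real (incidence Ed v e)"
  have "(\<Sum>v\<in>UNIV. mat_apply (laplacian Ed) g v * cnj (g v))
      = (\<Sum>e\<in>Ed. \<Sum>v\<in>UNIV. grad Ed g e * (?c v e * cnj (g v)))"
    unfolding mat_apply_laplacian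
    by (subst sum.swap) (simp add: sum_distrib_right sum_distrib_left mult_ac)
  also have "\<dots> = (\<Sum>e\<in>Ed. grad Ed g e * cnj (grad Ed g e))"
    by (simp add: grad_def cnj_sum sum_distrib_left)
  also have "\<dots> = complex_of_real (\<Sum>e\<in>Ed. (cmod (grad Ed g e))\<^sup>2)"
    by (simp only: complex_norm_square of_real_sum)
  finally show ?thesis unfolding re_inner_def by (metis Re_complex_of_real Re_sum)
qed

lemma re_inner_laplacian_const:
  fixes Ed :: "('v::finite \<times> 'v) set"
  assumes "simple_oriented_graph Ed"
  shows "re_inner (mat_apply (laplacian Ed) g) (\<lambda>v. c) = 0"
proof -
  have "(\<Sum>v\<in>UNIV. mat_apply (laplacian Ed) g v)
      = (\<Sum>u\<in>UNIV. complex_of_real (\<Sum>v\<in>UNIV. laplacian Ed v u) * g u)"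
    unfolding mat_apply_def by (subst sum.swap) (simp add: of_real_sum sum_distrib_right)
  then have "(\<Sum>v\<in>UNIV. mat_apply (laplacian Ed) g v * cnj c) = 0"
    by (simp add: sum_laplacian[OF assms] flip: sum_distrib_right)
  then show ?thesis
    unfolding re_inner_def by (metis Re_sum zero_complex.sel(1))
qed

lemma cmod_diff_adjacent_le:
  fixes Ed :: "('v::finite \<times> 'v) set"
  assumes "simple_oriented_graph Ed" and "adjacent Ed x y"
  shows "cmod (g x - g y) \<le> sqrt (re_inner (mat_apply (laplacian Ed) g) g)"
proof -
  have "(cmod (g b - g a))\<^sup>2 \<le> re_inner (mat_apply (laplacian Ed) g) g" if "(a, b) \<in> Ed" for a b
    unfolding re_inner_laplacian_self grad_edge[OF assms(1) that, symmetric]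
    by (rule member_le_sum) (use that in auto)
  from this[of x y] this[of y x] assms(2)
  have "(cmod (g x - g y))\<^sup>2 \<le> re_inner (mat_apply (laplacian Ed) g) g"
    unfolding adjacent_def by (auto simp: norm_minus_commute)
  then show ?thesis by (simp add: real_le_rsqrt)
qed

lemma cmod_diff_connected_le:
  fixes Ed :: "('v::finite \<times> 'v) set"
  assumes "simple_oriented_graph Ed" and "connected_graph Ed"
  shows "cmod (g u - g w)
    \<le> real (card {(x, y). adjacent Ed x y}) * sqrt (re_inner (mat_apply (laplacian Ed) g) g)"
proof -
  let ?R = "{(x, y). adjacent Ed x y}"
  let ?s = "sqrt (re_inner (mat_apply (laplacian Ed) g) g)"
  have "0 \<le> ?s" by (simp add: re_inner_laplacian_self sum_nonneg)
  have path: "cmod (g u - g w) \<le> real n * ?s" if "(u, w) \<in> ?R ^^ n" for n w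
    using that
  proof (induction n arbitrary: w)
    case (Suc n)
    then obtain x where "(u, x) \<in> ?R ^^ n" and "adjacent Ed x w" by auto
    have "cmod (g u - g w) \<le> cmod (g u - g x) + cmod (g x - g w)"
      by (rule norm_diff_triangle_le) auto
    also have "\<dots> \<le> real n * ?s + ?s"
      using Suc.IH[OF \<open>(u, x) \<in> ?R ^^ n\<close>] cmod_diff_adjacent_le[OF assms(1) \<open>adjacent Ed x w\<close>, of g]
      by simp
    finally show ?case by (simp add: algebra_simps)
  qed simp
  from assms(2) have "(adjacent Ed)\<^sup>*\<^sup>* u w" unfolding connected_graph_def by blast
  then have "(u, w) \<in> ?R\<^sup>*" by (simp add: rtranclp_rtrancl_eq)
  then obtain n where "n \<le> card ?R" and "(u, w) \<in> ?R ^^ n"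
    using rtrancl_finite_eq_relpow[of ?R] by auto
  with path \<open>0 \<le> ?s\<close> show ?thesis
    by (meson of_nat_mono mult_right_mono order_trans)
qed

lemma laplacian_poincare:
  fixes Ed :: "('v::finite \<times> 'v) set"
  assumes "simple_oriented_graph Ed" and "connected_graph Ed"
  shows "sq_l2_norm (\<lambda>v. g v - g w)
    \<le> (real CARD('v) * (real (card {(x, y). adjacent Ed x y}))\<^sup>2)\<^sup>2
       * sq_l2_norm (mat_apply (laplacian Ed) g)"
proof -
  define K where "K = real CARD('v) * (real (card {(x, y). adjacent Ed x y}))\<^sup>2"
  let ?Lg = "mat_apply (laplacian Ed) g"
  let ?Q = "re_inner ?Lg g"
  let ?X = "sq_l2_norm (\<lambda>v. g v - g w)"
  have "0 \<le> ?Q" by (simp add: re_inner_laplacian_self sum_nonneg)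
  have "?X \<le> (\<Sum>v\<in>(UNIV::'v set). (real (card {(x, y). adjacent Ed x y}) * sqrt ?Q)\<^sup>2)"
    unfolding sq_l2_norm_def
    by (intro sum_mono power_mono cmod_diff_connected_le[OF assms]) auto
  also have "\<dots> = K * ?Q" using \<open>0 \<le> ?Q\<close> by (simp add: K_def power_mult_distrib)
  finally have "?X \<le> K * ?Q" .
  have "?Q = re_inner ?Lg (\<lambda>v. g v - g w)"
    by (simp add: re_inner_diff_right re_inner_laplacian_const[OF assms(1)])
  then have "?Q\<^sup>2 \<le> sq_l2_norm ?Lg * ?X" by (metis re_inner_Cauchy_Schwarz)
  have "?X * ?X \<le> (K\<^sup>2 * sq_l2_norm ?Lg) * ?X"
  proof -
    have "?X\<^sup>2 \<le> (K * ?Q)\<^sup>2"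
      using \<open>?X \<le> K * ?Q\<close> by (intro power_mono) (auto simp: sq_l2_norm_nonneg)
    also have "\<dots> \<le> K\<^sup>2 * (sq_l2_norm ?Lg * ?X)"
      using \<open>?Q\<^sup>2 \<le> _\<close> by (simp add: power_mult_distrib mult_left_mono)
    finally show ?thesis by (simp add: power2_eq_square mult_ac)
  qed
  then show ?thesis
    using sq_l2_norm_nonneg[of "\<lambda>v. g v - g w"] sq_l2_norm_nonneg[of ?Lg]
    by (cases "?X = 0") (auto simp: K_def)
qed

theorem proposition2p4:
  fixes Ed :: "('v::finite \<times> 'v) set"
  assumes "simple_oriented_graph Ed"
    and "connected_graph Ed"
  shows "\<exists>p::real. 2 < p \<and>
    (\<forall>t::real. \<forall>f :: 'v \<Rightarrow> complex. t \<ge> 0 \<longrightarrow>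
       lp_norm p (mat_apply (mat_exp (mat_scale (- t) (mat_mult (laplacian Ed) (laplacian Ed)))) f)
         \<le> lp_norm p f)"
proof -
  define C where "C = (real CARD('v) * (real (card {(x, y). adjacent Ed x y}))\<^sup>2)\<^sup>2"
  define M where "M = (\<Sum>v\<in>UNIV. \<Sum>u\<in>UNIV. (laplacian Ed v u)\<^sup>2)"
  define q where "q = 1 / (1 + C * M)"
  have "0 \<le> C * M" by (simp add: C_def M_def sum_nonneg)
  then have "0 < q" and "q \<le> 1" and "q * (C * M) \<le> 1"
    by (auto simp: q_def field_simps)
  have small: "q\<^sup>2 * C * M \<le> 1"
  proof -
    have "q\<^sup>2 * C * M = q * (q * (C * M))" by (simp add: power2_eq_square mult_ac)
    also have "\<dots> \<le> 1"
      using \<open>q \<le> 1\<close> \<open>0 < q\<close> \<open>0 \<le> C * M\<close> \<open>q * (C * M) \<le> 1\<close>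
      by (meson mult_le_one mult_nonneg_nonneg less_imp_le)
    finally show ?thesis .
  qed
  have "0 \<le> (\<Sum>v\<in>UNIV. cmod (g v) powr q
      * Re (mat_apply (mat_mult (laplacian Ed) (laplacian Ed)) g v * cnj (g v)))" for g
    unfolding re_inner_mat_apply_sym[OF laplacian_sym]
    by (rule re_inner_powr_mult_nonneg[OF laplacian_poincare[OF assms] \<open>0 < q\<close>])
       (use small in \<open>simp add: C_def M_def\<close>)
  then have "lp_norm (2 + q) (mat_apply (mat_exp (mat_scale (- t)
      (mat_mult (laplacian Ed) (laplacian Ed)))) f) \<le> lp_norm (2 + q) f" if "0 \<le> t" for t f
    using \<open>0 < q\<close> that by (intro lp_norm_mat_exp_neg_scale_le) auto
  with \<open>0 < q\<close> show ?thesis by (intro exI[of _ "2 + q"]) auto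
qed

end
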